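(* Let $\mathcal A$ be a commutative semiring with negation map $(-)$ and let $A,B\in M_n(\mathcal A)$. Then $\mathrm{adj}(B)\,\mathrm{adj}(A)\preceq_\circ \mathrm{adj}(AB)$ (entrywise).
   Context: A commutative semiring: commutative associative addition with neutral $\mathbb 0$, commutative associative multiplication with identity $\mathbb 1$, distributive, $x\mathbb 0=\mathbb 0$. Negation map: $(-):\mathcal A\to\mathcal A$ with $(-)(x+y)=(-)x+(-)y$, $(-)((-)x)=x$, $(-)(xy)=((-)x)y$. Write $x(-)y:=x+((-)y)$, $x^\circ:=x(-)x$; $x\preceq_\circ y$ iff $y=x+z^\circ$ for some $z\in\mathcal A$; for matrices, $X\preceq_\circ Y$ iff $X_{ij}\preceq_\circ Y_{ij}$ for all $i,j$. For a permutation $\pi$, $(-)^\pi x=x$ if $\pi$ is even and $(-)x$ if odd; similarly $(-)^kx$ is $x$ for $k$ even and $(-)x$ for $k$ odd. The $(-)$-determinant of $A=(a_{ij})$ is $|A|=\sum_{\pi\in S_n}(-)^\pi\prod_i a_{i,\pi(i)}$. The $(-)$-adjoint $\mathrm{adj}(A)$ is the matrix whose $(i,j)$ entry is $(-)^{i+j}|A_{(j,i)}|$, where $A_{(j,i)}$ is $A$ with row $j$ and column $i$ deleted. *)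

theory Defs
  imports "HOL-Combinatorics.Combinatorics"
begin

text \<open>Matrices over a commutative semiring, of size n, represented as functions
  nat \<Rightarrow> nat \<Rightarrow> 'a; only entries with indices < n are relevant.\<close>

definition neg_map :: "('a::comm_semiring_1 \<Rightarrow> 'a) \<Rightarrow> bool" where
  "neg_map ng \<longleftrightarrow> (\<forall>x y. ng (x + y) = ng x + ng y) \<and> (\<forall>x. ng (ng x) = x)
     \<and> (\<forall>x y. ng (x * y) = ng x * y)"

definition quasi_zero :: "('a::comm_semiring_1 \<Rightarrow> 'a) \<Rightarrow> 'a \<Rightarrow> 'a" where
  "quasi_zero ng x = x + ng x"

definition circ_le :: "('a::comm_semiring_1 \<Rightarrow> 'a) \<Rightarrow> 'a \<Rightarrow> 'a \<Rightarrow> bool" where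
  "circ_le ng x y \<longleftrightarrow> (\<exists>z. y = x + quasi_zero ng z)"

definition mat_circ_le :: "('a::comm_semiring_1 \<Rightarrow> 'a) \<Rightarrow> nat \<Rightarrow> (nat \<Rightarrow> nat \<Rightarrow> 'a)
    \<Rightarrow> (nat \<Rightarrow> nat \<Rightarrow> 'a) \<Rightarrow> bool" where
  "mat_circ_le ng n X Y \<longleftrightarrow> (\<forall>i<n. \<forall>j<n. circ_le ng (X i j) (Y i j))"

definition neg_pow :: "('a::comm_semiring_1 \<Rightarrow> 'a) \<Rightarrow> nat \<Rightarrow> 'a \<Rightarrow> 'a" where
  "neg_pow ng k x = (if even k then x else ng x)"

definition neg_sign :: "('a::comm_semiring_1 \<Rightarrow> 'a) \<Rightarrow> (nat \<Rightarrow> nat) \<Rightarrow> 'a \<Rightarrow> 'a" where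
  "neg_sign ng p x = (if evenperm p then x else ng x)"

definition mat_mult :: "nat \<Rightarrow> (nat \<Rightarrow> nat \<Rightarrow> 'a::comm_semiring_1)
    \<Rightarrow> (nat \<Rightarrow> nat \<Rightarrow> 'a) \<Rightarrow> nat \<Rightarrow> nat \<Rightarrow> 'a" where
  "mat_mult n A B = (\<lambda>i j. \<Sum>k<n. A i k * B k j)"

definition neg_det :: "('a::comm_semiring_1 \<Rightarrow> 'a) \<Rightarrow> nat \<Rightarrow> (nat \<Rightarrow> nat \<Rightarrow> 'a) \<Rightarrow> 'a" where
  "neg_det ng n A = (\<Sum>p\<in>{p. p permutes {..<n}}. neg_sign ng p (\<Prod>i<n. A i (p i)))"

definition minor_mat :: "(nat \<Rightarrow> nat \<Rightarrow> 'a) \<Rightarrow> nat \<Rightarrow> nat \<Rightarrow> nat \<Rightarrow> nat \<Rightarrow> 'a" where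
  "minor_mat A j i = (\<lambda>k l. A (if k < j then k else Suc k) (if l < i then l else Suc l))"

definition neg_adj :: "('a::comm_semiring_1 \<Rightarrow> 'a) \<Rightarrow> nat \<Rightarrow> (nat \<Rightarrow> nat \<Rightarrow> 'a)
    \<Rightarrow> nat \<Rightarrow> nat \<Rightarrow> 'a" where
  "neg_adj ng n A = (\<lambda>i j. neg_pow ng (i + j) (neg_det ng (n - 1) (minor_mat A j i)))"

end

theory Submission
  imports Defs "HOL-Library.FuncSet"
begin

text \<open>A negation map is multiplication by some e with e * e = 1, so the quasi-zeros are the
  multiples of 1 + e. The (j, i) minor of AB is the product of an m \<times> (m+1) matrix P and an
  (m+1) \<times> m matrix Q, for which Cauchy-Binet holds up to a quasi-zero. Expanding det(PQ)
  multilinearly over the maps f from rows to columns, an injective f missing the column k is a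
  permutation followed by the order-preserving skip of k, and these terms sum to
  det(P without column k) det(Q without row k); a non-injective f contributes a determinant with
  two equal rows, which is a quasi-zero because composing with the transposition of those rows
  pairs the even permutations with the odd ones. The signs match since
  (-)^(i+k) (-)^(k+j) = (-)^(i+j).\<close>

lemma neg_map_scalar:
  assumes "neg_map ng"
  obtains e where "e * e = 1" and "\<And>x. ng x = e * x"
proof
  have ng_mult: "ng (x * y) = ng x * y" for x y using assms by (simp add: neg_map_def)
  show ng_eq: "ng x = ng 1 * x" for x using ng_mult[of 1 x] by simp
  show "ng 1 * ng 1 = 1"
    using assms ng_eq[of "ng 1"] by (simp add: neg_map_def)
qed

lemma neg_sign_eq_mult: "neg_map ng \<Longrightarrow> neg_sign ng p x = neg_sign ng p 1 * x"
  by (elim neg_map_scalar) (simp add: neg_sign_def)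

lemma neg_sign_comp:
  assumes "neg_map ng" and "permutation p" and "permutation q"
  shows "neg_sign ng (p \<circ> q) 1 = neg_sign ng p 1 * neg_sign ng q 1"
  using assms(1) by (elim neg_map_scalar) (auto simp: neg_sign_def evenperm_comp[OF assms(2,3)])

lemma neg_pow_mult_neg_pow:
  "neg_map ng \<Longrightarrow> neg_pow ng a x * neg_pow ng b y = neg_pow ng (a + b) (x * y)"
  by (elim neg_map_scalar) (auto simp: neg_pow_def mult_ac, metis mult.assoc mult_1)

lemma quasi_zero_eq_mult: "neg_map ng \<Longrightarrow> quasi_zero ng z = (1 + ng 1) * z"
  by (elim neg_map_scalar) (simp add: quasi_zero_def distrib_right)

lemma neg_det_eq_sum_mult:
  assumes "neg_map ng"
  shows "neg_det ng m M = (\<Sum>p | p permutes {..<m}. neg_sign ng p 1 * (\<Prod>i<m. M i (p i)))"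
  unfolding neg_det_def by (intro sum.cong refl neg_sign_eq_mult[OF assms])

lemma neg_det_permute_rows:
  assumes ng: "neg_map ng" and \<tau>: "\<tau> permutes {..<m}"
  shows "neg_det ng m (\<lambda>r. M (\<tau> r)) = neg_sign ng \<tau> (neg_det ng m M)"
proof -
  let ?P = "{p. p permutes {..<m}}"
  have "neg_det ng m (\<lambda>r. M (\<tau> r)) = (\<Sum>p\<in>?P. neg_sign ng p 1 * (\<Prod>r<m. M r (p (inv \<tau> r))))"
    unfolding neg_det_eq_sum_mult[OF ng]
  proof (intro sum.cong refl arg_cong2[where f = "(*)"])
    fix p
    have "(\<Prod>r<m. M (\<tau> r) (p r)) = (\<Prod>r<m. M (\<tau> (inv \<tau> r)) (p (inv \<tau> r)))"
      using prod.permute[OF permutes_inv[OF \<tau>], of "\<lambda>r. M (\<tau> r) (p r)"] by (simp add: comp_def)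
    then show "(\<Prod>r<m. M (\<tau> r) (p r)) = (\<Prod>r<m. M r (p (inv \<tau> r)))"
      by (simp add: permutes_inverses(1)[OF \<tau>])
  qed
  also have "\<dots> = (\<Sum>p\<in>?P. neg_sign ng (p \<circ> \<tau>) 1 * (\<Prod>r<m. M r ((p \<circ> \<tau>) (inv \<tau> r))))"
    by (rule sum_permutations_compose_right[OF \<tau>])
  also have "\<dots> = (\<Sum>p\<in>?P. neg_sign ng \<tau> 1 * (neg_sign ng p 1 * (\<Prod>r<m. M r (p r))))"
  proof (intro sum.cong refl)
    fix p assume "p \<in> ?P"
    then have "neg_sign ng (p \<circ> \<tau>) 1 = neg_sign ng p 1 * neg_sign ng \<tau> 1"
      using \<tau> by (intro neg_sign_comp[OF ng]) (auto intro: permutes_imp_permutation[OF finite_lessThan])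
    then show "neg_sign ng (p \<circ> \<tau>) 1 * (\<Prod>r<m. M r ((p \<circ> \<tau>) (inv \<tau> r)))
        = neg_sign ng \<tau> 1 * (neg_sign ng p 1 * (\<Prod>r<m. M r (p r)))"
      by (simp add: permutes_inverses(1)[OF \<tau>] mult_ac)
  qed
  finally show ?thesis
    unfolding neg_sign_eq_mult[OF ng, of \<tau> "neg_det ng m M"]
    by (simp add: neg_det_eq_sum_mult[OF ng] sum_distrib_left)
qed

lemma neg_det_equal_rows:
  assumes ng: "neg_map ng" and ab: "a < m" "b < m" "a \<noteq> b" and "M a = M b"
  shows "\<exists>z. neg_det ng m M = quasi_zero ng z"
proof -
  obtain e where nge: "\<And>x. ng x = e * x" using neg_map_scalar[OF ng] by blast
  let ?P = "{p. p permutes {..<m}}"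
  let ?\<tau> = "transpose a b"
  let ?X = "\<lambda>p. \<Prod>r<m. M r (p r)"
  have \<tau>: "?\<tau> permutes {..<m}" by (rule permutes_swap_id) (use ab in auto)
  have X_swap: "(\<Prod>r<m. M r (p (?\<tau> r))) = ?X p" for p
  proof -
    have "?X p = (\<Prod>r<m. M (?\<tau> r) (p (?\<tau> r)))"
      using prod.permute[OF \<tau>, of "\<lambda>r. M r (p r)"] by (simp add: comp_def)
    also have "\<dots> = (\<Prod>r<m. M r (p (?\<tau> r)))"
      using \<open>M a = M b\<close> by (intro prod.cong refl) (simp add: transpose_def)
    finally show ?thesis by simp
  qed
  have parity_swap: "evenperm (p \<circ> ?\<tau>) \<longleftrightarrow> \<not> evenperm p" if "p \<in> ?P" for p
  proof -
    have "permutation p" "permutation ?\<tau>"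
      using that \<tau> by (auto intro: permutes_imp_permutation[OF finite_lessThan])
    then show ?thesis using ab(3) by (simp add: evenperm_comp evenperm_swap)
  qed
  have "(\<Sum>p\<in>?P. if evenperm p then 0 else e * ?X p)
      = (\<Sum>p\<in>?P. if evenperm (p \<circ> ?\<tau>) then 0 else e * ?X (p \<circ> ?\<tau>))"
    by (rule sum_permutations_compose_right[OF \<tau>])
  also have "\<dots> = e * (\<Sum>p\<in>?P. if evenperm p then ?X p else 0)"
    unfolding sum_distrib_left by (intro sum.cong refl) (simp add: parity_swap X_swap)
  finally have odd_part: "(\<Sum>p\<in>?P. if evenperm p then 0 else e * ?X p)
      = e * (\<Sum>p\<in>?P. if evenperm p then ?X p else 0)" .
  have "neg_det ng m M
      = (\<Sum>p\<in>?P. if evenperm p then ?X p else 0) + (\<Sum>p\<in>?P. if evenperm p then 0 else e * ?X p)"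
    unfolding neg_det_def neg_sign_def nge sum.distrib[symmetric] by (intro sum.cong) auto
  then have "neg_det ng m M = quasi_zero ng (\<Sum>p\<in>?P. if evenperm p then ?X p else 0)"
    by (simp add: odd_part quasi_zero_def nge)
  then show ?thesis ..
qed

lemma neg_det_cong:
  assumes "\<And>i j. i < m \<Longrightarrow> j < m \<Longrightarrow> M i j = M' i j"
  shows "neg_det ng m M = neg_det ng m M'"
  unfolding neg_det_def
  using assms permutes_in_image by (intro sum.cong refl arg_cong[where f = "neg_sign ng _"] prod.cong) fastforce+

lemma neg_det_mult_expand:
  fixes N :: nat
  assumes ng: "neg_map ng"
  shows "neg_det ng m (\<lambda>r s. \<Sum>k<N. P r k * Q k s)
       = (\<Sum>f\<in>{..<m} \<rightarrow>\<^sub>E {..<N}. (\<Prod>r<m. P r (f r)) * neg_det ng m (\<lambda>r. Q (f r)))"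
proof -
  let ?P = "{p. p permutes {..<m}}"
  let ?F = "{..<m} \<rightarrow>\<^sub>E {..<N}"
  have "neg_det ng m (\<lambda>r s. \<Sum>k<N. P r k * Q k s)
      = (\<Sum>p\<in>?P. \<Sum>f\<in>?F. neg_sign ng p 1 * ((\<Prod>r<m. P r (f r)) * (\<Prod>r<m. Q (f r) (p r))))"
    unfolding neg_det_eq_sum_mult[OF ng]
  proof (intro sum.cong refl)
    fix p
    have "(\<Prod>r<m. \<Sum>k<N. P r k * Q k (p r)) = (\<Sum>f\<in>?F. \<Prod>r<m. P r (f r) * Q (f r) (p r))"
      by (rule prod_sum_PiE) auto
    then show "neg_sign ng p 1 * (\<Prod>r<m. \<Sum>k<N. P r k * Q k (p r))
        = (\<Sum>f\<in>?F. neg_sign ng p 1 * ((\<Prod>r<m. P r (f r)) * (\<Prod>r<m. Q (f r) (p r))))"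
      by (simp add: prod.distrib sum_distrib_left)
  qed
  also have "\<dots> = (\<Sum>f\<in>?F. \<Sum>p\<in>?P. neg_sign ng p 1 * ((\<Prod>r<m. P r (f r)) * (\<Prod>r<m. Q (f r) (p r))))"
    by (rule sum.swap)
  also have "\<dots> = (\<Sum>f\<in>?F. (\<Prod>r<m. P r (f r)) * neg_det ng m (\<lambda>r. Q (f r)))"
    by (simp add: neg_det_eq_sum_mult[OF ng] sum_distrib_left mult_ac)
  finally show ?thesis .
qed

definition skip_index :: "nat \<Rightarrow> nat \<Rightarrow> nat" where
  "skip_index k r = (if r < k then r else Suc r)"

definition unskip_index :: "nat \<Rightarrow> nat \<Rightarrow> nat" where
  "unskip_index k x = (if x < k then x else x - 1)"

lemma unskip_skip_index [simp]: "unskip_index k (skip_index k r) = r"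
  by (simp add: skip_index_def unskip_index_def)

lemma skip_unskip_index: "x \<noteq> k \<Longrightarrow> skip_index k (unskip_index k x) = x"
  by (auto simp: skip_index_def unskip_index_def)

lemma skip_index_neq [simp]: "skip_index k r \<noteq> k"
  by (simp add: skip_index_def)

lemma skip_index_less_Suc: "r < m \<Longrightarrow> skip_index k r < Suc m"
  by (simp add: skip_index_def)

lemma unskip_index_less: "x < Suc m \<Longrightarrow> x \<noteq> k \<Longrightarrow> k < Suc m \<Longrightarrow> unskip_index k x < m"
  by (auto simp: unskip_index_def)

lemma inj_skip_index: "inj (skip_index k)"
  by (metis injI unskip_skip_index)

lemma minor_mat_skip_index: "minor_mat A j i = (\<lambda>r s. A (skip_index j r) (skip_index i s))"
  by (simp add: minor_mat_def skip_index_def)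

lemma bij_betw_permutes_injections_avoiding:
  assumes k: "k < Suc m"
  shows "bij_betw (\<lambda>\<tau>. restrict (skip_index k \<circ> \<tau>) {..<m}) {\<tau>. \<tau> permutes {..<m}}
           {f \<in> {..<m} \<rightarrow>\<^sub>E {..<Suc m}. inj_on f {..<m} \<and> k \<notin> f ` {..<m}}"
    (is "bij_betw ?j ?P ?T")
proof (rule bij_betw_byWitness[where f' = "\<lambda>f r. if r < m then unskip_index k (f r) else r"])
  show "\<forall>\<tau>\<in>?P. (\<lambda>r. if r < m then unskip_index k (?j \<tau> r) else r) = \<tau>"
    by (auto simp: fun_eq_iff permutes_not_in)
  show "\<forall>f\<in>?T. ?j (\<lambda>r. if r < m then unskip_index k (f r) else r) = f"
  proof
    fix f assume f: "f \<in> ?T"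
    have "restrict (skip_index k \<circ> (\<lambda>r. if r < m then unskip_index k (f r) else r)) {..<m}
        = restrict f {..<m}"
    proof (rule restrict_ext)
      fix r assume r: "r \<in> {..<m}"
      then have "f r \<noteq> k" using f by blast
      with r show "(skip_index k \<circ> (\<lambda>r. if r < m then unskip_index k (f r) else r)) r = f r"
        by (simp add: skip_unskip_index)
    qed
    also have "\<dots> = f"
      using f PiE_restrict[of f "{..<m}" "\<lambda>_. {..<Suc m}"] by blast
    finally show "?j (\<lambda>r. if r < m then unskip_index k (f r) else r) = f" .
  qed
  show "?j ` ?P \<subseteq> ?T"
  proof clarify
    fix \<tau> assume \<tau>: "\<tau> permutes {..<m}"
    have "inj (skip_index k \<circ> \<tau>)"
      using inj_skip_index permutes_inj[OF \<tau>] by (rule inj_compose)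
    then show "?j \<tau> \<in> {..<m} \<rightarrow>\<^sub>E {..<Suc m} \<and> inj_on (?j \<tau>) {..<m} \<and> k \<notin> ?j \<tau> ` {..<m}"
      using permutes_in_image[OF \<tau>] skip_index_neq[of k, symmetric]
      by (auto simp: skip_index_less_Suc inj_on_def inj_def)
  qed
  show "(\<lambda>f r. if r < m then unskip_index k (f r) else r) ` ?T \<subseteq> ?P"
  proof clarify
    fix f assume f: "f \<in> {..<m} \<rightarrow>\<^sub>E {..<Suc m}" "inj_on f {..<m}" "k \<notin> f ` {..<m}"
    let ?g = "\<lambda>r. if r < m then unskip_index k (f r) else r"
    have f_range: "f r < Suc m" "f r \<noteq> k" if "r < m" for r
      using f that by auto
    have "inj_on ?g {..<m}"
    proof (rule inj_onI)
      fix x y assume x: "x \<in> {..<m}" and y: "y \<in> {..<m}" and "?g x = ?g y"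
      then have "skip_index k (unskip_index k (f x)) = skip_index k (unskip_index k (f y))" by simp
      then have "f x = f y" using f_range x y by (simp add: skip_unskip_index)
      then show "x = y" using inj_onD[OF f(2)] x y by blast
    qed
    moreover have "?g ` {..<m} \<subseteq> {..<m}"
      using f_range k by (auto simp: unskip_index_less)
    ultimately have "bij_betw ?g {..<m} {..<m}"
      unfolding bij_betw_def using endo_inj_surj[OF finite_lessThan] by blast
    then show "?g permutes {..<m}" by (rule bij_imp_permutes) simp
  qed
qed

lemma sum_injections_avoiding:
  assumes ng: "neg_map ng" and k: "k < Suc m"
  shows "(\<Sum>f\<in>{f \<in> {..<m} \<rightarrow>\<^sub>E {..<Suc m}. inj_on f {..<m} \<and> k \<notin> f ` {..<m}}.
            (\<Prod>r<m. P r (f r)) * neg_det ng m (\<lambda>r. Q (f r)))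
       = neg_det ng m (\<lambda>r s. P r (skip_index k s)) * neg_det ng m (\<lambda>r. Q (skip_index k r))"
    (is "?lhs = _")
proof -
  let ?P = "{\<tau>. \<tau> permutes {..<m}}"
  let ?D = "neg_det ng m (\<lambda>r. Q (skip_index k r))"
  have "?lhs = (\<Sum>\<tau>\<in>?P. (\<Prod>r<m. P r (restrict (skip_index k \<circ> \<tau>) {..<m} r))
      * neg_det ng m (\<lambda>r. Q (restrict (skip_index k \<circ> \<tau>) {..<m} r)))"
    by (rule sum.reindex_bij_betw[OF bij_betw_permutes_injections_avoiding[OF k], symmetric])
  also have "\<dots> = (\<Sum>\<tau>\<in>?P. (\<Prod>r<m. P r (skip_index k (\<tau> r))) * neg_sign ng \<tau> ?D)"
  proof (intro sum.cong refl arg_cong2[where f = "(*)"])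
    fix \<tau> assume \<tau>: "\<tau> \<in> ?P"
    show "(\<Prod>r<m. P r (restrict (skip_index k \<circ> \<tau>) {..<m} r)) = (\<Prod>r<m. P r (skip_index k (\<tau> r)))"
      by simp
    have "neg_det ng m (\<lambda>r. Q (restrict (skip_index k \<circ> \<tau>) {..<m} r))
        = neg_det ng m (\<lambda>r. Q (skip_index k (\<tau> r)))"
      by (rule neg_det_cong) simp
    also have "\<dots> = neg_sign ng \<tau> ?D"
      using neg_det_permute_rows[OF ng, of \<tau> m "\<lambda>r. Q (skip_index k r)"] \<tau> by simp
    finally show "neg_det ng m (\<lambda>r. Q (restrict (skip_index k \<circ> \<tau>) {..<m} r)) = neg_sign ng \<tau> ?D" .
  qed
  also have "\<dots> = (\<Sum>\<tau>\<in>?P. neg_sign ng \<tau> (\<Prod>r<m. P r (skip_index k (\<tau> r)))) * ?D"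
    by (subst (1 2) neg_sign_eq_mult[OF ng]) (simp add: sum_distrib_left mult_ac)
  also have "\<dots> = neg_det ng m (\<lambda>r s. P r (skip_index k s)) * ?D"
    by (simp add: neg_det_def)
  finally show ?thesis .
qed

lemma neg_det_mult_cauchy_binet:
  assumes ng: "neg_map ng"
  shows "\<exists>z. neg_det ng m (\<lambda>r s. \<Sum>k<Suc m. P r k * Q k s)
     = (\<Sum>k<Suc m. neg_det ng m (\<lambda>r s. P r (skip_index k s)) * neg_det ng m (\<lambda>r. Q (skip_index k r)))
       + quasi_zero ng z"
proof -
  let ?F = "{..<m} \<rightarrow>\<^sub>E {..<Suc m}"
  let ?I = "{f. inj_on f {..<m}}"
  define G where "G f = (\<Prod>r<m. P r (f r)) * neg_det ng m (\<lambda>r. Q (f r))" for f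
  have fin: "finite ?F" by (simp add: finite_PiE)
  have "(1 + ng 1) dvd sum G (?F - ?I)"
  proof (rule dvd_sum)
    fix f assume "f \<in> ?F - ?I"
    then obtain a b where "a < m" "b < m" "a \<noteq> b" "f a = f b" by (auto simp: inj_on_def)
    then obtain z where "neg_det ng m (\<lambda>r. Q (f r)) = quasi_zero ng z"
      using neg_det_equal_rows[OF ng, of a m b "\<lambda>r. Q (f r)"] by auto
    then show "(1 + ng 1) dvd G f" by (simp add: G_def quasi_zero_eq_mult[OF ng])
  qed
  then obtain z where non_injective: "sum G (?F - ?I) = quasi_zero ng z"
    by (auto simp: quasi_zero_eq_mult[OF ng] dvd_def)
  have misses_one: "card {k \<in> {..<Suc m}. k \<notin> f ` {..<m}} = 1" if f: "f \<in> ?F \<inter> ?I" for f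
  proof -
    have "f ` {..<m} \<subseteq> {..<Suc m}" and "card (f ` {..<m}) = m"
      using f by (auto simp: PiE_iff card_image)
    moreover have "{k \<in> {..<Suc m}. k \<notin> f ` {..<m}} = {..<Suc m} - f ` {..<m}" by auto
    ultimately show ?thesis by (simp add: card_Diff_subset)
  qed
  have "sum G (?F \<inter> ?I) = (\<Sum>f\<in>?F \<inter> ?I. \<Sum>k | k \<in> {..<Suc m} \<and> k \<notin> f ` {..<m}. G f)"
    by (intro sum.cong refl) (use misses_one in auto)
  also have "\<dots> = (\<Sum>k<Suc m. \<Sum>f | f \<in> ?F \<inter> ?I \<and> k \<notin> f ` {..<m}. G f)"
    by (rule sum.swap_restrict) (simp_all add: fin)
  also have "\<dots> = (\<Sum>k<Suc m. neg_det ng m (\<lambda>r s. P r (skip_index k s)) * neg_det ng m (\<lambda>r. Q (skip_index k r)))"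
    unfolding G_def
    by (intro sum.cong refl) (simp add: conj_assoc flip: sum_injections_avoiding[OF ng])
  finally have injective: "sum G (?F \<inter> ?I)
      = (\<Sum>k<Suc m. neg_det ng m (\<lambda>r s. P r (skip_index k s)) * neg_det ng m (\<lambda>r. Q (skip_index k r)))" .
  have "neg_det ng m (\<lambda>r s. \<Sum>k<Suc m. P r k * Q k s) = sum G ?F"
    unfolding G_def by (rule neg_det_mult_expand[OF ng])
  also have "\<dots> = sum G (?F \<inter> ?I) + sum G (?F - ?I)"
    by (rule sum.Int_Diff[OF fin])
  finally show ?thesis
    unfolding injective non_injective ..
qed

lemma neg_adj_mult_entry:
  assumes ng: "neg_map ng" and "i < n" "j < n"
  shows "\<exists>z. neg_adj ng n (mat_mult n A B) i j
       = mat_mult n (neg_adj ng n B) (neg_adj ng n A) i j + quasi_zero ng z"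
proof -
  from \<open>i < n\<close> obtain m where n: "n = Suc m" by (cases n) auto
  obtain z where cauchy_binet: "neg_det ng m (minor_mat (mat_mult n A B) j i)
      = (\<Sum>k<n. neg_det ng m (minor_mat A j k) * neg_det ng m (minor_mat B k i)) + quasi_zero ng z"
    using neg_det_mult_cauchy_binet[OF ng, of m "\<lambda>r. A (skip_index j r)" "\<lambda>k s. B k (skip_index i s)"]
    by (auto simp: minor_mat_skip_index mat_mult_def n)
  obtain e where nge: "\<And>x. ng x = e * x" using neg_map_scalar[OF ng] by blast
  let ?c = "neg_pow ng (i + j) 1"
  have sign: "neg_pow ng (i + k) x * neg_pow ng (k + j) y = ?c * (y * x)" for k x y
  proof -
    have "even (i + k + (k + j)) \<longleftrightarrow> even (i + j)" by presburger
    then have "neg_pow ng (i + k + (k + j)) (x * y) = ?c * (y * x)"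
      by (simp add: neg_pow_def nge mult.commute)
    then show ?thesis by (simp add: neg_pow_mult_neg_pow[OF ng])
  qed
  have "neg_adj ng n (mat_mult n A B) i j
      = ?c * ((\<Sum>k<n. neg_det ng m (minor_mat A j k) * neg_det ng m (minor_mat B k i)) + quasi_zero ng z)"
    unfolding neg_adj_def n diff_Suc_1 cauchy_binet[unfolded n] by (simp add: neg_pow_def nge)
  also have "\<dots> = (\<Sum>k<n. ?c * (neg_det ng m (minor_mat A j k) * neg_det ng m (minor_mat B k i)))
      + quasi_zero ng (?c * z)"
    by (simp add: sum_distrib_left quasi_zero_def nge algebra_simps)
  also have "\<dots> = mat_mult n (neg_adj ng n B) (neg_adj ng n A) i j + quasi_zero ng (?c * z)"
    unfolding mat_mult_def neg_adj_def sign n diff_Suc_1 ..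
  finally show ?thesis ..
qed

theorem proposition8p20:
  fixes ng :: "'a::comm_semiring_1 \<Rightarrow> 'a" and n :: nat
    and A B :: "nat \<Rightarrow> nat \<Rightarrow> 'a"
  assumes "neg_map ng"
  shows "mat_circ_le ng n (mat_mult n (neg_adj ng n B) (neg_adj ng n A))
           (neg_adj ng n (mat_mult n A B))"
  using neg_adj_mult_entry[OF assms] by (simp add: mat_circ_le_def circ_le_def)

end
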